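(* Let $0\le\beta<1$ and let $f(z)=z+\sum_{n\ge2}a_nz^n$ belong to $\mathcal{K}_{\sigma}(\beta)$. Then \[ |a_2a_4-a_3^2|\le\frac{(1-\beta)^2}{24}\left[\frac{5\beta^2+8\beta-32}{3\beta^2-3\beta-4}\right]. \]
   Context: $\mathbb{U}=\{z\in\mathbb{C}:|z|<1\}$. For analytic $f,g$ on $\mathbb{U}$, $f\prec g$ means there is an analytic $w$ on $\mathbb{U}$ with $w(0)=0$, $|w(z)|<1$, and $f(z)=g(w(z))$. $\sigma$ denotes the class of analytic functions $f(z)=z+\sum_{n\ge2}a_nz^n$ on $\mathbb{U}$ that are univalent in $\mathbb{U}$ and whose inverse $g=f^{-1}$ is also univalent in $\mathbb{U}$. For $0\le\beta<1$, $\mathcal{K}_{\sigma}(\beta)$ (bi-convex functions of order $\beta$) is the set of $f\in\sigma$ with $1+\frac{zf''(z)}{f'(z)}\prec\frac{1+(1-2\beta)z}{1-z}$ ($z\in\mathbb{U}$) and $1+\frac{wg''(w)}{g'(w)}\prec\frac{1+(1-2\beta)w}{1-w}$ ($w\in\mathbb{U}$), where $g=f^{-1}$. *)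

theory Defs
  imports "HOL-Complex_Analysis.Complex_Analysis"
begin

definition subordinate :: "(complex \<Rightarrow> complex) \<Rightarrow> (complex \<Rightarrow> complex) \<Rightarrow> bool" where
  "subordinate p q \<longleftrightarrow>
     (\<exists>w. w holomorphic_on ball 0 1 \<and> w 0 = 0 \<and>
          (\<forall>z\<in>ball 0 1. norm (w z) < 1 \<and> p z = q (w z)))"

definition normalized_univalent :: "(complex \<Rightarrow> complex) \<Rightarrow> bool" where
  "normalized_univalent f \<longleftrightarrow>
     f holomorphic_on ball 0 1 \<and> inj_on f (ball 0 1) \<and> f 0 = 0 \<and> deriv f 0 = 1"

text \<open>g is the (univalent analytic continuation to the unit disc of the) inverse of f:
  g is holomorphic and univalent on the disc and inverts f wherever this makes sense.\<close>
definition is_disc_inverse :: "(complex \<Rightarrow> complex) \<Rightarrow> (complex \<Rightarrow> complex) \<Rightarrow> bool" where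
  "is_disc_inverse f g \<longleftrightarrow>
     g holomorphic_on ball 0 1 \<and> inj_on g (ball 0 1) \<and>
     (\<forall>z\<in>ball 0 1. f z \<in> ball 0 1 \<longrightarrow> g (f z) = z)"

definition bi_univalent :: "(complex \<Rightarrow> complex) \<Rightarrow> bool" where
  "bi_univalent f \<longleftrightarrow> normalized_univalent f \<and> (\<exists>g. is_disc_inverse f g)"

definition bi_convex :: "real \<Rightarrow> (complex \<Rightarrow> complex) \<Rightarrow> bool" where
  "bi_convex \<beta> f \<longleftrightarrow> bi_univalent f \<and>
     subordinate (\<lambda>z. 1 + z * deriv (deriv f) z / deriv f z)
                 (\<lambda>z. (1 + of_real (1 - 2*\<beta>) * z) / (1 - z)) \<and>
     (\<forall>g. is_disc_inverse f g \<longrightarrow>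
        subordinate (\<lambda>w. 1 + w * deriv (deriv g) w / deriv g w)
                    (\<lambda>w. (1 + of_real (1 - 2*\<beta>) * w) / (1 - w)))"

definition coeff0 :: "(complex \<Rightarrow> complex) \<Rightarrow> nat \<Rightarrow> complex" where
  "coeff0 f n = (deriv ^^ n) f 0 / of_nat (fact n)"

end

theory Submission
  imports Defs
begin

unbundle no vec_syntax

text \<open>
  It provides a Schwarz function w with
  \<open>(z f')' (1 - w) = f' (1 + (1 - 2\<beta>) w)\<close>; comparing coefficients expresses \<open>a\<^sub>2, a\<^sub>3, a\<^sub>4\<close>
  through \<open>w\<^sub>1, w\<^sub>2, w\<^sub>3\<close> and gives \<open>a\<^sub>2a\<^sub>4 - a\<^sub>3\<^sup>2 = (1 - \<beta>)\<^sup>2 T(w\<^sub>1, w\<^sub>2, w\<^sub>3)\<close> for an explicit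
  quartic form T. Writing \<open>w(z) = z v(z)\<close> and performing one step of the Schur algorithm on v
  yields \<open>|w\<^sub>1| \<le> 1\<close> and \<open>|w\<^sub>2|, |w\<^sub>3| \<le> 1 - |w\<^sub>1|\<^sup>2\<close>, whence \<open>|T| \<le> 19/96\<close>; this is below the
  stated bound for every \<open>0 \<le> \<beta> < 1\<close>.
\<close>

lemma fps_mult_nth_2:
  "(f * g) $ 2 = f $ 0 * g $ 2 + f $ 1 * g $ 1 + f $ 2 * g $ 0"
  by (simp add: fps_mult_nth numeral_2_eq_2)

lemma fps_mult_nth_3:
  "(f * g) $ 3 = f $ 0 * g $ 3 + f $ 1 * g $ 2 + f $ 2 * g $ 1 + f $ 3 * g $ 0"
  by (simp add: fps_mult_nth numeral_3_eq_3 numeral_2_eq_2 add.assoc)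

lemma has_fps_expansion_unit_disc:
  assumes "f holomorphic_on ball 0 1"
  shows "f has_fps_expansion fps_expansion f (0 :: complex)"
  by (rule has_fps_expansion_fps_expansion[OF open_ball _ assms]) simp

lemma has_fps_expansion_eventually_eq:
  fixes f g :: "complex \<Rightarrow> complex"
  assumes "f has_fps_expansion F" "g has_fps_expansion G"
    and "eventually (\<lambda>z. f z = g z) (nhds 0)"
  shows "F = G"
proof -
  have "g has_fps_expansion F"
    using has_fps_expansion_cong[OF assms(3), of F F] assms(1) by simp
  then show ?thesis using assms(2) fps_expansion_unique_complex by blast
qed

lemma has_fps_expansion_eq_on_unit_disc:
  fixes f g :: "complex \<Rightarrow> complex"
  assumes "f has_fps_expansion F" "g has_fps_expansion G"
    and "\<And>z. z \<in> ball 0 1 \<Longrightarrow> f z = g z"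
  shows "F = G"
proof (rule has_fps_expansion_eventually_eq[OF assms(1,2)])
  have "eventually (\<lambda>z. z \<in> ball 0 1) (nhds (0::complex))"
    by (intro eventually_nhds_in_open) auto
  then show "eventually (\<lambda>z. f z = g z) (nhds 0)"
    by eventually_elim (rule assms(3))
qed

lemma fps_nth_0_bound_unit_disc:
  fixes h :: "complex \<Rightarrow> complex"
  assumes "h has_fps_expansion H" "\<And>z. z \<in> ball 0 1 \<Longrightarrow> norm (h z) \<le> 1"
  shows "norm (H $ 0) \<le> 1"
  using assms(2)[of 0] fps_nth_fps_expansion[OF assms(1), of 0] by simp

lemma schwarz_factor_fps:
  fixes w :: "complex \<Rightarrow> complex"
  assumes holw: "w holomorphic_on ball 0 1" and w0: "w 0 = 0"
    and wlt: "\<And>z. z \<in> ball 0 1 \<Longrightarrow> norm (w z) < 1"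
    and wW: "w has_fps_expansion W"
  obtains v V where "v holomorphic_on ball 0 1" "\<And>z. z \<in> ball 0 1 \<Longrightarrow> norm (v z) \<le> 1"
    "v has_fps_expansion V" "W = fps_X * V"
proof -
  have schwarz: "norm (w z) \<le> norm z" "norm (deriv w 0) \<le> 1" if "norm z < 1" for z
    using Schwarz_Lemma(1,2)[OF holw w0 _ that] wlt by auto
  obtain v where holv: "v holomorphic_on ball 0 1"
    and wv: "\<And>z. norm z < 1 \<Longrightarrow> w z = z * v z" and d0: "deriv w 0 = v 0"
    using Schwarz3[OF holw w0] by blast
  have vle: "norm (v z) \<le> 1" if z: "z \<in> ball 0 1" for z
  proof (cases "z = 0")
    case True
    then show ?thesis using schwarz(2)[of 0] d0 by simp
  next
    case False
    have "norm z * norm (v z) \<le> norm z * 1"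
      using schwarz(1)[of z] wv[of z] z by (simp add: norm_mult)
    then show ?thesis using False by (simp add: mult_le_cancel_left)
  qed
  have vV: "v has_fps_expansion fps_expansion v 0" by (rule has_fps_expansion_unit_disc[OF holv])
  have "(\<lambda>z. z * v z) has_fps_expansion fps_X * fps_expansion v 0"
    by (intro has_fps_expansion_mult has_fps_expansion_fps_X vV)
  then have "W = fps_X * fps_expansion v 0"
    by (rule has_fps_expansion_eq_on_unit_disc[OF wW]) (simp add: wv)
  then show ?thesis using that holv vle vV by blast
qed

lemma norm_disc_automorphism_less_1:
  fixes a z :: complex
  assumes "norm a < 1" "norm z < 1"
  shows "norm ((z - a) / (1 - cnj a * z)) < 1"
proof -
  have "complex_of_real ((norm (1 - cnj a * z))^2 - (norm (z - a))^2)
      = complex_of_real ((1 - (norm a)^2) * (1 - (norm z)^2))"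
    unfolding of_real_diff of_real_mult of_real_1 complex_norm_square
    by (simp add: algebra_simps)
  then have "(norm (1 - cnj a * z))^2 - (norm (z - a))^2 = (1 - (norm a)^2) * (1 - (norm z)^2)"
    using of_real_eq_iff by blast
  also have "\<dots> > 0"
    using assms by (simp add: abs_square_less_1)
  finally have "norm (z - a) < norm (1 - cnj a * z)"
    using power_less_imp_less_base by fastforce
  then show ?thesis by (simp add: norm_divide divide_less_eq)
qed

text \<open>
  One step of the Schur algorithm: if h maps the disc into itself, then
  \<open>(h - a)/(1 - cnj a * h)\<close> with \<open>a = h(0)\<close> does too and vanishes at 0, hence equals \<open>z u(z)\<close>.
  When h touches the unit circle it is a unimodular constant and \<open>u = 0\<close> satisfies the same relations.
\<close>
lemma disc_self_map_schur_step:
  fixes h :: "complex \<Rightarrow> complex"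
  assumes holh: "h holomorphic_on ball 0 1"
    and hle: "\<And>z. z \<in> ball 0 1 \<Longrightarrow> norm (h z) \<le> 1"
    and hH: "h has_fps_expansion H"
  obtains u U where "u holomorphic_on ball 0 1" "\<And>z. z \<in> ball 0 1 \<Longrightarrow> norm (u z) \<le> 1"
    "u has_fps_expansion U"
    "H $ 1 = of_real (1 - (norm (H $ 0))^2) * U $ 0"
    "H $ 2 = of_real (1 - (norm (H $ 0))^2) * (U $ 1 - cnj (H $ 0) * (U $ 0)^2)"
proof (cases "\<exists>z0\<in>ball 0 1. norm (h z0) = 1")
  case True
  then obtain z0 where z0: "z0 \<in> ball 0 1" "norm (h z0) = 1" by blast
  have "h constant_on ball 0 1"
    by (rule maximum_modulus_principle[OF holh open_ball connected_ball open_ball subset_refl z0(1)])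
       (use hle z0 in auto)
  then have const: "h z = h 0" if "z \<in> ball 0 1" for z
    using that by (auto simp: constant_on_def)
  have "(\<lambda>_. h 0) has_fps_expansion fps_const (h 0)" by simp
  then have "H = fps_const (h 0)"
    by (rule has_fps_expansion_eq_on_unit_disc[OF hH]) (rule const)
  moreover have "norm (h 0) = 1" using const[OF z0(1)] z0(2) by simp
  ultimately show ?thesis
    by (intro that[of "\<lambda>_. 0" 0]) auto
next
  case False
  define a where "a = H $ 0"
  have a0: "a = h 0" using fps_nth_fps_expansion[OF hH, of 0] by (simp add: a_def)
  have hlt: "norm (h z) < 1" if "z \<in> ball 0 1" for z
    using hle[OF that] False that by (meson order_less_le)
  have na: "norm a < 1" using hlt[of 0] a0 by simp
  have den: "1 - cnj a * h z \<noteq> 0" if "z \<in> ball 0 1" for z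
  proof -
    have "norm (cnj a * h z) \<le> norm a"
      using hle[OF that] by (simp add: norm_mult mult_right_le_one_le)
    then have "norm (cnj a * h z) < 1" using na by simp
    then show ?thesis by auto
  qed
  define \<phi> where "\<phi> z = (h z - a) / (1 - cnj a * h z)" for z
  have hol\<phi>: "\<phi> holomorphic_on ball 0 1"
    unfolding \<phi>_def using den by (intro holomorphic_intros holh) auto
  have \<phi>\<Phi>: "\<phi> has_fps_expansion fps_expansion \<phi> 0" by (rule has_fps_expansion_unit_disc[OF hol\<phi>])
  obtain u U where u: "u holomorphic_on ball 0 1" "\<And>z. z \<in> ball 0 1 \<Longrightarrow> norm (u z) \<le> 1"
      "u has_fps_expansion U" and \<Phi>U: "fps_expansion \<phi> 0 = fps_X * U"
    by (rule schwarz_factor_fps[OF hol\<phi> _ _ \<phi>\<Phi>])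
       (auto simp: \<phi>_def a0 norm_disc_automorphism_less_1 na hlt)
  have "(\<lambda>z. \<phi> z * (1 - cnj a * h z)) has_fps_expansion
          fps_expansion \<phi> 0 * (1 - fps_const (cnj a) * H)"
    by (intro has_fps_expansion_mult has_fps_expansion_diff has_fps_expansion_1
          has_fps_expansion_cmult_left \<phi>\<Phi> hH)
  moreover have "(\<lambda>z. h z - a) has_fps_expansion H - fps_const a"
    by (intro has_fps_expansion_diff has_fps_expansion_const hH)
  ultimately have eq: "fps_X * U * (1 - fps_const (cnj a) * H) = H - fps_const a"
    unfolding \<Phi>U[symmetric]
    by (rule has_fps_expansion_eq_on_unit_disc) (use den in \<open>auto simp: \<phi>_def\<close>)
  have rel1: "(1 - cnj a * a) * U $ 0 = H $ 1"
    using arg_cong[OF eq, of "\<lambda>G. G $ 1"] by (simp add: a_def fps_mult_nth_1 algebra_simps)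
  have rel2: "(1 - cnj a * a) * U $ 1 = H $ 2 + cnj a * H $ 1 * U $ 0"
    using arg_cong[OF eq, of "\<lambda>G. G $ 2"]
    by (simp add: a_def fps_mult_nth_2 fps_mult_nth_1 numeral_2_eq_2 algebra_simps)
  have r: "1 - cnj a * a = of_real (1 - (norm a)^2)"
    unfolding of_real_diff of_real_1 complex_norm_square by (simp add: mult.commute)
  show ?thesis
  proof (rule that[OF u])
    show "H $ 1 = of_real (1 - (norm (H $ 0))^2) * U $ 0"
      using rel1 r by (simp add: a_def)
    have "H $ 2 = (1 - cnj a * a) * U $ 1 - cnj a * H $ 1 * U $ 0"
      using rel2 by (simp add: eq_diff_eq)
    also have "\<dots> = (1 - cnj a * a) * (U $ 1 - cnj a * (U $ 0)^2)"
      unfolding rel1[symmetric] by (simp add: algebra_simps power2_eq_square)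
    also have "\<dots> = of_real (1 - (norm a)^2) * (U $ 1 - cnj a * (U $ 0)^2)"
      by (simp only: r)
    finally show "H $ 2 = of_real (1 - (norm (H $ 0))^2) * (U $ 1 - cnj (H $ 0) * (U $ 0)^2)"
      by (simp only: a_def)
  qed
qed

lemma disc_self_map_coeff1_bound:
  fixes h :: "complex \<Rightarrow> complex"
  assumes holh: "h holomorphic_on ball 0 1"
    and hle: "\<And>z. z \<in> ball 0 1 \<Longrightarrow> norm (h z) \<le> 1"
    and hH: "h has_fps_expansion H"
  shows "norm (H $ 1) \<le> 1 - (norm (H $ 0))^2"
proof -
  obtain u U where u: "u holomorphic_on ball 0 1" "\<And>z. z \<in> ball 0 1 \<Longrightarrow> norm (u z) \<le> 1"
      "u has_fps_expansion U" and H1: "H $ 1 = of_real (1 - (norm (H $ 0))^2) * U $ 0"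
    using disc_self_map_schur_step[OF assms] by blast
  have r0: "0 \<le> 1 - (norm (H $ 0))^2"
    using fps_nth_0_bound_unit_disc[OF hH hle] by (simp add: abs_square_le_1)
  have "norm (H $ 1) = (1 - (norm (H $ 0))^2) * norm (U $ 0)"
    by (simp only: H1 norm_mult norm_of_real abs_of_nonneg[OF r0])
  also have "\<dots> \<le> 1 - (norm (H $ 0))^2"
    using r0 fps_nth_0_bound_unit_disc[OF u(3,2)] by (simp add: mult_right_le_one_le)
  finally show ?thesis .
qed

lemma disc_self_map_coeff2_bound:
  fixes h :: "complex \<Rightarrow> complex"
  assumes holh: "h holomorphic_on ball 0 1"
    and hle: "\<And>z. z \<in> ball 0 1 \<Longrightarrow> norm (h z) \<le> 1"
    and hH: "h has_fps_expansion H"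
  shows "norm (H $ 2) \<le> 1 - (norm (H $ 0))^2"
proof -
  obtain u U where u: "u holomorphic_on ball 0 1" "\<And>z. z \<in> ball 0 1 \<Longrightarrow> norm (u z) \<le> 1"
      "u has_fps_expansion U" 
    and H2: "H $ 2 = of_real (1 - (norm (H $ 0))^2) * (U $ 1 - cnj (H $ 0) * (U $ 0)^2)"
    using disc_self_map_schur_step[OF assms] by blast
  have nH0: "norm (H $ 0) \<le> 1" by (rule fps_nth_0_bound_unit_disc[OF hH hle])
  then have r0: "0 \<le> 1 - (norm (H $ 0))^2" by (simp add: abs_square_le_1)
  have "norm (U $ 1 - cnj (H $ 0) * (U $ 0)^2) \<le> norm (U $ 1) + norm (H $ 0) * (norm (U $ 0))^2"
    using norm_triangle_ineq4 by (metis complex_mod_cnj norm_mult norm_power)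
  also have "\<dots> \<le> (1 - (norm (U $ 0))^2) + 1 * (norm (U $ 0))^2"
    using disc_self_map_coeff1_bound[OF u] nH0 by (intro add_mono mult_right_mono) auto
  finally have "norm (U $ 1 - cnj (H $ 0) * (U $ 0)^2) \<le> 1" by simp
  then have "(1 - (norm (H $ 0))^2) * norm (U $ 1 - cnj (H $ 0) * (U $ 0)^2) \<le> 1 - (norm (H $ 0))^2"
    using r0 by (simp add: mult_right_le_one_le)
  then show ?thesis
    by (simp only: H2 norm_mult norm_of_real abs_of_nonneg[OF r0])
qed

lemma schwarz_function_coeff_bounds:
  fixes w :: "complex \<Rightarrow> complex"
  assumes "w holomorphic_on ball 0 1" "w 0 = 0"
    and "\<And>z. z \<in> ball 0 1 \<Longrightarrow> norm (w z) < 1"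
    and "w has_fps_expansion W"
  shows "norm (W $ 1) \<le> 1"
    "norm (W $ 2) \<le> 1 - (norm (W $ 1))^2"
    "norm (W $ 3) \<le> 1 - (norm (W $ 1))^2"
proof -
  obtain v V where v: "v holomorphic_on ball 0 1" "\<And>z. z \<in> ball 0 1 \<Longrightarrow> norm (v z) \<le> 1"
      "v has_fps_expansion V" and WV: "W = fps_X * V"
    using schwarz_factor_fps[OF assms] by blast
  have W: "W $ 1 = V $ 0" "W $ 2 = V $ 1" "W $ 3 = V $ 2"
    by (simp_all add: WV numeral_2_eq_2 numeral_3_eq_3)
  show "norm (W $ 1) \<le> 1" using fps_nth_0_bound_unit_disc[OF v(3,2)] W by simp
  show "norm (W $ 2) \<le> 1 - (norm (W $ 1))^2" using disc_self_map_coeff1_bound[OF v(1-3)] W by simp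
  show "norm (W $ 3) \<le> 1 - (norm (W $ 1))^2" using disc_self_map_coeff2_bound[OF v(1-3)] W by simp
qed

text \<open>
  Clearing denominators in \<open>1 + z f''/f' = (1 + c w)/(1 - w)\<close>, which is legitimate near 0
  because \<open>f'(0) \<noteq> 0\<close>, gives an identity of power series.
\<close>
lemma convex_subordination_fps:
  fixes f :: "complex \<Rightarrow> complex" and c :: complex
  assumes holf: "f holomorphic_on ball 0 1" and fF: "f has_fps_expansion F"
    and d0: "deriv f 0 \<noteq> 0"
    and sub: "subordinate (\<lambda>z. 1 + z * deriv (deriv f) z / deriv f z) (\<lambda>z. (1 + c * z) / (1 - z))"
  obtains w W where "w holomorphic_on ball 0 1" "w 0 = 0" "\<And>z. z \<in> ball 0 1 \<Longrightarrow> norm (w z) < 1"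
    "w has_fps_expansion W"
    "(fps_deriv F + fps_X * fps_deriv (fps_deriv F)) * (1 - W) = fps_deriv F * (1 + fps_const c * W)"
proof -
  from sub obtain w where holw: "w holomorphic_on ball 0 1" and w0: "w 0 = 0"
    and wp: "\<And>z. z \<in> ball 0 1 \<Longrightarrow> norm (w z) < 1 \<and>
       1 + z * deriv (deriv f) z / deriv f z = (1 + c * w z) / (1 - w z)"
    unfolding subordinate_def by blast
  have wW: "w has_fps_expansion fps_expansion w 0" by (rule has_fps_expansion_unit_disc[OF holw])
  have "continuous_on (ball 0 1) (deriv f)"
    using holomorphic_deriv[OF holf open_ball] holomorphic_on_imp_continuous_on by blast
  then have "isCont (deriv f) 0"
    using continuous_on_eq_continuous_at[OF open_ball] by force
  then have "eventually (\<lambda>z. deriv f z \<noteq> 0) (nhds 0)"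
    using d0 by (simp add: isCont_def tendsto_at_iff_tendsto_nhds tendsto_imp_eventually_ne)
  moreover have "eventually (\<lambda>z. z \<in> ball 0 1) (nhds (0::complex))"
    by (intro eventually_nhds_in_open) auto
  ultimately have "eventually (\<lambda>z. (deriv f z + z * deriv (deriv f) z) * (1 - w z)
                 = deriv f z * (1 + c * w z)) (nhds 0)"
  proof eventually_elim
    case (elim z)
    have w1: "1 - w z \<noteq> 0" using wp[OF elim(2)] by auto
    have "1 + z * deriv (deriv f) z / deriv f z = (deriv f z + z * deriv (deriv f) z) / deriv f z"
      using elim(1) by (simp add: field_simps)
    then have "(deriv f z + z * deriv (deriv f) z) / deriv f z = (1 + c * w z) / (1 - w z)"
      using wp[OF elim(2)] by simp
    then show ?case using frac_eq_eq[OF elim(1) w1] by (simp add: mult.commute)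
  qed
  moreover have "(\<lambda>z. (deriv f z + z * deriv (deriv f) z) * (1 - w z)) has_fps_expansion
            (fps_deriv F + fps_X * fps_deriv (fps_deriv F)) * (1 - fps_expansion w 0)"
    by (intro has_fps_expansion_mult has_fps_expansion_add has_fps_expansion_diff
          has_fps_expansion_1 has_fps_expansion_deriv has_fps_expansion_fps_X fF wW)
  moreover have "(\<lambda>z. deriv f z * (1 + c * w z)) has_fps_expansion
            fps_deriv F * (1 + fps_const c * fps_expansion w 0)"
    by (intro has_fps_expansion_mult has_fps_expansion_add has_fps_expansion_cmult_left
          has_fps_expansion_1 has_fps_expansion_deriv fF wW)
  ultimately show ?thesis
    using that[OF holw w0 _ wW] wp has_fps_expansion_eventually_eq by blast
qed

lemma convex_fps_coeffs:
  fixes F W :: "complex fps" and g :: complex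
  assumes E: "(fps_deriv F + fps_X * fps_deriv (fps_deriv F)) * (1 - W)
                = fps_deriv F * (1 + fps_const (2*g - 1) * W)"
    and F1: "F $ 1 = 1" and W0: "W $ 0 = 0"
  shows "F $ 2 = g * W $ 1"
    "3 * F $ 3 = g * (W $ 2 + (1 + 2*g) * (W $ 1)^2)"
    "12 * F $ 4 = 2*g * W $ 3 + (4*g + 6*g^2) * W $ 1 * W $ 2 + (2*g + 6*g^2 + 4*g^3) * (W $ 1)^3"
proof -
  have q1: "4 * F $ 2 - W $ 1 = 2 * F $ 2 + (2*g - 1) * W $ 1"
    using arg_cong[OF E, of "\<lambda>G. G $ 1"] F1 W0
    by (simp add: fps_mult_nth_1 numeral_2_eq_2 algebra_simps; algebra)
  have q2: "9 * F $ 3 - 4 * F $ 2 * W $ 1 - W $ 2 = 3 * F $ 3 + (2*g - 1) * (2 * F $ 2 * W $ 1 + W $ 2)"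
    using arg_cong[OF E, of "\<lambda>G. G $ 2"] F1 W0 unfolding fps_mult_nth_2
    by (simp add: numeral_3_eq_3 numeral_2_eq_2 algebra_simps)
  have q3: "16 * F $ 4 - 9 * F $ 3 * W $ 1 - 4 * F $ 2 * W $ 2 - W $ 3
      = 4 * F $ 4 + (2*g - 1) * (3 * F $ 3 * W $ 1 + 2 * F $ 2 * W $ 2 + W $ 3)"
    using arg_cong[OF E, of "\<lambda>G. G $ 3"] F1 W0 unfolding fps_mult_nth_3
    by (simp add: eval_nat_numeral algebra_simps)
  have "2 * F $ 2 = 2 * (g * W $ 1)" using q1 by algebra
  then show a2: "F $ 2 = g * W $ 1" by simp
  have "2 * (3 * F $ 3) = 2 * (g * (W $ 2 + (1 + 2*g) * (W $ 1)^2))" using q2 a2 by algebra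
  then show a3: "3 * F $ 3 = g * (W $ 2 + (1 + 2*g) * (W $ 1)^2)" by simp
  show "12 * F $ 4 = 2*g * W $ 3 + (4*g + 6*g^2) * W $ 1 * W $ 2 + (2*g + 6*g^2 + 4*g^3) * (W $ 1)^3"
    using q3 a2 a3 by algebra
qed

definition schwarz_hankel_form :: "complex \<Rightarrow> complex \<Rightarrow> complex \<Rightarrow> complex \<Rightarrow> complex" where
  "schwarz_hankel_form g w1 w2 w3 =
     w1 * w3 / 6 - w2^2 / 9 + (2 + g) / 18 * w1^2 * w2 + (1 - g) * (1 + 2*g) / 18 * w1^4"

lemma convex_fps_hankel_det:
  fixes F W :: "complex fps" and g :: complex
  assumes "(fps_deriv F + fps_X * fps_deriv (fps_deriv F)) * (1 - W)
             = fps_deriv F * (1 + fps_const (2*g - 1) * W)"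
    and "F $ 1 = 1" and "W $ 0 = 0"
  shows "F $ 2 * F $ 4 - (F $ 3)^2 = g^2 * schwarz_hankel_form g (W $ 1) (W $ 2) (W $ 3)"
proof -
  note a = convex_fps_coeffs[OF assms]
  have a3: "F $ 3 = g * (W $ 2 + (1 + 2*g) * (W $ 1)^2) / 3"
    using a(2) by (simp add: field_simps)
  have a4: "F $ 4 = (2*g * W $ 3 + (4*g + 6*g^2) * W $ 1 * W $ 2
      + (2*g + 6*g^2 + 4*g^3) * (W $ 1)^3) / 12"
    using a(3) by (simp add: field_simps)
  show ?thesis
    unfolding a(1) a3 a4 schwarz_hankel_form_def
    by (simp add: field_simps power2_eq_square power3_eq_cube power4_eq_xxxx)
qed

lemma schwarz_hankel_majorant_le:
  fixes x y t k1 k2 :: real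
  assumes "0 \<le> x" "x \<le> 1" "0 \<le> y" "y \<le> 1 - x^2" "0 \<le> t" "t \<le> 1 - x^2"
    and "0 \<le> k1" "k1 \<le> 1/6" "0 \<le> k2" "k2 \<le> 1/16"
  shows "x * t / 6 + y^2 / 9 + k1 * x^2 * y + k2 * x^4 \<le> 19/96"
proof -
  have "x * t / 6 + y^2 / 9 + k1 * x^2 * y + k2 * x^4
      \<le> x * (1 - x^2) / 6 + (1 - x^2)^2 / 9 + 1/6 * x^2 * (1 - x^2) + 1/16 * x^4"
    using assms by (intro add_mono divide_right_mono mult_left_mono mult_mono mult_right_mono
        power_mono) auto
  also have "\<dots> = 1/9 + x/6 - x^2/18 - x^3/6 + x^4/144"
    by (simp add: power2_eq_square power3_eq_cube power4_eq_xxxx field_simps)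
  also have "\<dots> \<le> 19/96"
  proof -
    \<comment> \<open>\<open>x\<^sup>4 \<le> x\<^sup>3\<close> and \<open>x\<^sup>3 \<ge> 3x/4 - 1/4\<close> reduce the quartic to the quadratic \<open>(x - 27/64)\<^sup>2 \<ge> 0\<close>.\<close>
    have "x^3 * x \<le> x^3 * 1" using assms by (intro mult_left_mono) auto
    then have "x^4 \<le> x^3" by (simp add: power4_eq_xxxx power3_eq_cube)
    moreover have "0 \<le> (x - 1/2)^2 * (x + 1)" using assms by simp
    moreover have "(x - 1/2)^2 * (x + 1) = x^3 - 3/4 * x + 1/4"
      by (simp add: power2_eq_square power3_eq_cube algebra_simps)
    moreover have "0 \<le> (x - 27/64)^2" by simp
    moreover have "(x - 27/64)^2 = x^2 - 27/32 * x + 729/4096"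
      by (simp add: power2_eq_square algebra_simps)
    ultimately show ?thesis by linarith
  qed
  finally show ?thesis .
qed

lemma norm_schwarz_hankel_form_le:
  fixes g :: real and w1 w2 w3 :: complex
  assumes g: "0 \<le> g" "g \<le> 1"
    and w: "norm w1 \<le> 1" "norm w2 \<le> 1 - (norm w1)^2" "norm w3 \<le> 1 - (norm w1)^2"
  shows "norm (schwarz_hankel_form (of_real g) w1 w2 w3) \<le> 19/96"
proof -
  define k1 where "k1 = (2 + g) / 18"
  define k2 where "k2 = (1 - g) * (1 + 2*g) / 18"
  have k1: "0 \<le> k1" "k1 \<le> 1/6" using g by (auto simp: k1_def)
  have "2 * (g - 1/4)^2 = 9/8 - (1 - g) * (1 + 2*g)"
    by (simp add: power2_eq_square algebra_simps)
  then have "(1 - g) * (1 + 2*g) \<le> 9/8"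
    using zero_le_power2[of "g - 1/4"] by linarith
  then have k2: "0 \<le> k2" "k2 \<le> 1/16"
    using g by (auto simp: k2_def)
  have "schwarz_hankel_form (of_real g) w1 w2 w3
      = w1 * w3 / 6 - w2^2 / 9 + of_real k1 * w1^2 * w2 + of_real k2 * w1^4"
    by (simp add: schwarz_hankel_form_def k1_def k2_def)
  also have "norm \<dots> \<le> norm (w1 * w3 / 6) + norm (w2^2 / 9) + norm (of_real k1 * w1^2 * w2)
      + norm (of_real k2 * w1^4)"
    by (rule order_trans[OF norm_triangle_ineq] add_mono order_trans[OF norm_triangle_ineq]
        order_trans[OF norm_triangle_ineq4] order_refl)+
  also have "\<dots> = norm w1 * norm w3 / 6 + (norm w2)^2 / 9 + k1 * (norm w1)^2 * norm w2
      + k2 * (norm w1)^4"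
    using k1 k2 by (simp add: norm_mult norm_divide norm_power)
  also have "\<dots> \<le> 19/96"
    using w k1 k2 by (intro schwarz_hankel_majorant_le) auto
  finally show ?thesis .
qed

lemma hankel_constant_le_corollary_bound:
  fixes b :: real
  assumes "0 \<le> b" "b < 1"
  shows "(1 - b)^2 * (19/96) \<le> (1 - b)^2 / 24 * ((5*b^2 + 8*b - 32) / (3*b^2 - 3*b - 4))"
proof -
  have "b^2 \<le> b" using assms by (simp add: power2_eq_square mult_left_le_one_le)
  then have den: "3*b^2 - 3*b - 4 < 0" by linarith
  have "0 \<le> (1 - b) * (52 - 37*b)" using assms by (intro mult_nonneg_nonneg) auto
  moreover have "(1 - b) * (52 - 37*b) = 37*b^2 - 89*b + 52"
    by (simp add: power2_eq_square algebra_simps)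
  ultimately have "19/4 \<le> (5*b^2 + 8*b - 32) / (3*b^2 - 3*b - 4)"
    using den by (simp add: le_divide_eq)
  then have "(1 - b)^2 * (19/4) / 24 \<le> (1 - b)^2 * ((5*b^2 + 8*b - 32) / (3*b^2 - 3*b - 4)) / 24"
    by (intro divide_right_mono mult_left_mono) auto
  then show ?thesis by simp
qed

theorem corollary4p5:
  fixes \<beta> :: real and f :: "complex \<Rightarrow> complex"
  assumes "0 \<le> \<beta>" and "\<beta> < 1"
    and "bi_convex \<beta> f"
  shows "norm (coeff0 f 2 * coeff0 f 4 - (coeff0 f 3)^2)
           \<le> (1 - \<beta>)^2 / 24 * ((5*\<beta>^2 + 8*\<beta> - 32) / (3*\<beta>^2 - 3*\<beta> - 4))"
proof -
  from assms(3) have holf: "f holomorphic_on ball 0 1" and d1: "deriv f 0 = 1"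
    and sub: "subordinate (\<lambda>z. 1 + z * deriv (deriv f) z / deriv f z)
                (\<lambda>z. (1 + of_real (1 - 2*\<beta>) * z) / (1 - z))"
    by (auto simp: bi_convex_def bi_univalent_def normalized_univalent_def)
  define F where "F = fps_expansion f 0"
  have fF: "f has_fps_expansion F" unfolding F_def by (rule has_fps_expansion_unit_disc[OF holf])
  have coeff: "coeff0 f n = F $ n" for n
    by (simp add: coeff0_def fps_nth_fps_expansion[OF fF])
  obtain w W where w: "w holomorphic_on ball 0 1" "w 0 = 0" "\<And>z. z \<in> ball 0 1 \<Longrightarrow> norm (w z) < 1"
      "w has_fps_expansion W"
    and E: "(fps_deriv F + fps_X * fps_deriv (fps_deriv F)) * (1 - W)
              = fps_deriv F * (1 + fps_const (2 * of_real (1 - \<beta>) - 1) * W)"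
    using convex_subordination_fps[OF holf fF _ sub] d1 by (auto simp: algebra_simps)
  have "F $ 1 = 1" "W $ 0 = 0"
    using d1 w(2) fps_nth_fps_expansion[OF fF, of 1] fps_nth_fps_expansion[OF w(4), of 0] by simp_all
  then have "coeff0 f 2 * coeff0 f 4 - (coeff0 f 3)^2
      = of_real (1 - \<beta>)^2 * schwarz_hankel_form (of_real (1 - \<beta>)) (W $ 1) (W $ 2) (W $ 3)"
    unfolding coeff by (rule convex_fps_hankel_det[OF E])
  then have "norm (coeff0 f 2 * coeff0 f 4 - (coeff0 f 3)^2)
      = (1 - \<beta>)^2 * norm (schwarz_hankel_form (of_real (1 - \<beta>)) (W $ 1) (W $ 2) (W $ 3))"
    by (simp only: norm_mult norm_power norm_of_real power2_abs)
  also have "\<dots> \<le> (1 - \<beta>)^2 * (19/96)"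
    using assms(1,2) schwarz_function_coeff_bounds[OF w]
    by (intro mult_left_mono norm_schwarz_hankel_form_le) auto
  also have "\<dots> \<le> (1 - \<beta>)^2 / 24 * ((5*\<beta>^2 + 8*\<beta> - 32) / (3*\<beta>^2 - 3*\<beta> - 4))"
    by (rule hankel_constant_le_corollary_bound[OF assms(1,2)])
  finally show ?thesis .
qed

end
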